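(* There is a function $g(n)\to 0$ as $n\to\infty$ such that the following holds for all $n$, all $\delta\in[0,1]$ and $\eta>0$: if $F\subseteq E(K_n)$ satisfies $|F|>(1-\delta)n^2/4$ and $|F\setminus\Pi|>\eta n^2$ for every cut $\Pi$ of $K_n$, then $\tau(F)>\tfrac{1}{12}(\eta-3\delta-g(n))n^3$.
   Context: $K_n$ is the complete graph on $[n]$. A cut of $K_n$ is a set $\Pi=\nabla(W,[n]\setminus W)$ of all edges of $K_n$ joining $W$ and $[n]\setminus W$, for some $W\subseteq[n]$ (including $W=\emptyset$). $\tau(F)$ is the number of triangles of $K_n$ all of whose three edges lie in $F$. *)

theory Defs
  imports Complex_Main
begin

definition edges_K :: "nat \<Rightarrow> nat set set" where
  "edges_K n = {e. e \<subseteq> {1..n} \<and> card e = 2}"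

definition cut_K :: "nat \<Rightarrow> nat set \<Rightarrow> nat set set" where
  "cut_K n W = {e \<in> edges_K n. \<exists>u v. e = {u, v} \<and> u \<in> W \<and> v \<in> {1..n} - W}"

definition is_cut :: "nat \<Rightarrow> nat set set \<Rightarrow> bool" where
  "is_cut n P \<longleftrightarrow> (\<exists>W. W \<subseteq> {1..n} \<and> P = cut_K n W)"

definition tau :: "nat \<Rightarrow> nat set set \<Rightarrow> nat" where
  "tau n F = card {T. T \<subseteq> {1..n} \<and> card T = 3 \<and> (\<forall>e. e \<subseteq> T \<and> card e = 2 \<longrightarrow> e \<in> F)}"

end

theory Submission
  imports Defs "HOL-Analysis.Convex"
begin

(*
  For each vertex v, the cut separating the neighbourhood N(v) from the rest of [n] misses at
  least \<eta>n\<^sup>2 edges of F. Summing over v the number of edges of F with both ends inside or both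
  ends outside N(v) gives 2n|F| - 2\<Sigma>\<^sub>v deg(v)\<^sup>2 + 2(number of ordered triangles), which by
  Cauchy-Schwarz is at most 2n|F| - 8|F|\<^sup>2/n + 12\<tau>(F). Since |F| > (1 - \<delta>)n\<^sup>2/4 forces
  8|F|\<^sup>2 - 2n\<^sup>2|F| \<ge> -\<delta>n\<^sup>4/2, this yields 12\<tau>(F) > (2\<eta> - \<delta>/2)n\<^sup>3, so g = 0 already works.
*)

lemma sum_of_bool_pairs:
  assumes "finite A" "finite B"
  shows "(\<Sum>x\<in>A. \<Sum>y\<in>B. of_bool (P x y)) = (of_nat (card {(x, y) \<in> A \<times> B. P x y}) :: 'a::semiring_1)"
proof -
  have "(\<Sum>x\<in>A. \<Sum>y\<in>B. of_bool (P x y)) = (\<Sum>p\<in>A \<times> B. of_bool (case p of (x, y) \<Rightarrow> P x y) :: 'a)"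
    by (simp add: sum.cartesian_product split_def)
  also have "\<dots> = of_nat (card (A \<times> B \<inter> {p. case p of (x, y) \<Rightarrow> P x y}))"
    using assms by simp
  also have "A \<times> B \<inter> {p. case p of (x, y) \<Rightarrow> P x y} = {(x, y) \<in> A \<times> B. P x y}"
    by auto
  finally show ?thesis .
qed

lemma sum_of_bool_triples:
  assumes "finite A" "finite B" "finite C"
  shows "(\<Sum>x\<in>A. \<Sum>y\<in>B. \<Sum>z\<in>C. of_bool (P x y z))
    = (of_nat (card {(x, y, z) \<in> A \<times> B \<times> C. P x y z}) :: 'a::semiring_1)"
proof -
  have "(\<Sum>x\<in>A. \<Sum>y\<in>B. \<Sum>z\<in>C. of_bool (P x y z))
      = (\<Sum>p\<in>A \<times> B \<times> C. of_bool (case p of (x, y, z) \<Rightarrow> P x y z) :: 'a)"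
    by (simp add: sum.cartesian_product split_def)
  also have "\<dots> = of_nat (card (A \<times> B \<times> C \<inter> {p. case p of (x, y, z) \<Rightarrow> P x y z}))"
    using assms by simp
  also have "A \<times> B \<times> C \<inter> {p. case p of (x, y, z) \<Rightarrow> P x y z} = {(x, y, z) \<in> A \<times> B \<times> C. P x y z}"
    by auto
  finally show ?thesis .
qed

lemma dense_edge_count_quadratic_bound:
  fixes m N d :: real
  assumes "(1 - d) * N ^ 2 < 4 * m" "0 \<le> d" "0 \<le> m"
  shows "- d * N ^ 4 / 2 \<le> 2 * m * (4 * m - N ^ 2)"
proof (cases "N ^ 2 \<le> 4 * m")
  case True
  then have "0 \<le> 2 * m * (4 * m - N ^ 2)"
    using assms by simp
  moreover have "0 \<le> d * N ^ 4"
    using assms by simp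
  ultimately show ?thesis
    by linarith
next
  case False
  have "2 * m * (- d * N ^ 2) \<le> 2 * m * (4 * m - N ^ 2)"
    using assms by (intro mult_left_mono) (auto simp: algebra_simps)
  moreover have "2 * m * (d * N ^ 2) \<le> N ^ 2 / 2 * (d * N ^ 2)"
    using False assms by (intro mult_right_mono) auto
  ultimately show ?thesis
    by (simp add: algebra_simps power4_eq_xxxx power2_eq_square)
qed

definition adj :: "nat set set \<Rightarrow> nat \<Rightarrow> nat \<Rightarrow> real" where
  "adj F x y = of_bool ({x, y} \<in> F)"

definition degree :: "nat \<Rightarrow> nat set set \<Rightarrow> nat \<Rightarrow> real" where
  "degree n F v = (\<Sum>y\<in>{1..n}. adj F v y)"

definition neighbourhood :: "nat \<Rightarrow> nat set set \<Rightarrow> nat \<Rightarrow> nat set" where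
  "neighbourhood n F v = {y \<in> {1..n}. {v, y} \<in> F}"

lemma adj_commute: "adj F x y = adj F y x"
  by (simp add: adj_def insert_commute)

lemma finite_edges_K: "finite (edges_K n)"
  unfolding edges_K_def by (rule finite_subset[of _ "Pow {1..n}"]) auto

lemma doubleton_in_edges_K:
  "{x, y} \<in> edges_K n \<longleftrightarrow> x \<noteq> y \<and> x \<in> {1..n} \<and> y \<in> {1..n}"
  by (cases "x = y") (auto simp: edges_K_def)

lemma card_ordered_pairs_of_edges:
  assumes "S \<subseteq> edges_K n"
  shows "card {(x, y) \<in> {1..n} \<times> {1..n}. {x, y} \<in> S} = 2 * card S"
proof -
  have fibre: "card {(x, y). {x, y} = e} = 2" if "e \<in> S" for e
  proof -
    have "card e = 2" using that assms by (auto simp: edges_K_def)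
    then obtain u v where "e = {u, v}" "u \<noteq> v" by (meson card_2_iff)
    then have "{(x, y). {x, y} = e} = {(u, v), (v, u)}" by (auto simp: doubleton_eq_iff)
    with \<open>u \<noteq> v\<close> show ?thesis by simp
  qed
  have "{(x, y) \<in> {1..n} \<times> {1..n}. {x, y} \<in> S} = (\<Union>e\<in>S. {(x, y). {x, y} = e})"
    using assms by (auto simp: doubleton_in_edges_K)
  also have "card \<dots> = (\<Sum>e\<in>S. card {(x, y). {x, y} = e})"
    using fibre finite_subset[OF assms finite_edges_K]
    by (intro card_UN_disjoint) (auto intro: card_ge_0_finite)
  also have "\<dots> = 2 * card S"
    using fibre by simp
  finally show ?thesis .
qed

lemma sum_adj_eq_twice_card:
  assumes "S \<subseteq> edges_K n"
  shows "(\<Sum>x\<in>{1..n}. \<Sum>y\<in>{1..n}. adj S x y) = 2 * real (card S)"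
  unfolding adj_def sum_of_bool_pairs[OF finite_atLeastAtMost finite_atLeastAtMost]
  by (simp only: card_ordered_pairs_of_edges[OF assms])

lemma card_orderings_of_3set_le:
  assumes "card T = 3"
  shows "card {(x, y, z). {x, y, z} = T \<and> x \<noteq> y \<and> y \<noteq> z \<and> x \<noteq> z} \<le> 6"
proof -
  obtain a b c where T: "T = {a, b, c}"
    using assms by (auto simp: card_3_iff)
  let ?orderings = "[(a, b, c), (a, c, b), (b, a, c), (b, c, a), (c, a, b), (c, b, a)]"
  have "{(x, y, z). {x, y, z} = T \<and> x \<noteq> y \<and> y \<noteq> z \<and> x \<noteq> z} \<subseteq> set ?orderings"
  proof
    fix p assume "p \<in> {(x, y, z). {x, y, z} = T \<and> x \<noteq> y \<and> y \<noteq> z \<and> x \<noteq> z}"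
    then obtain x y z where "p = (x, y, z)" "{x, y, z} = T" "x \<noteq> y" "y \<noteq> z" "x \<noteq> z"
      by auto
    moreover from this have "x \<in> T" "y \<in> T" "z \<in> T" by auto
    ultimately show "p \<in> set ?orderings" unfolding T by simp blast
  qed
  then have "card {(x, y, z). {x, y, z} = T \<and> x \<noteq> y \<and> y \<noteq> z \<and> x \<noteq> z} \<le> card (set ?orderings)"
    by (intro card_mono) auto
  also have "\<dots> \<le> 6"
    using card_length[of ?orderings] by simp
  finally show ?thesis .
qed

lemma card_ordered_triangles_le_tau:
  assumes "F \<subseteq> edges_K n"
  shows "card {(x, y, z) \<in> {1..n} \<times> {1..n} \<times> {1..n}. {x, y} \<in> F \<and> {y, z} \<in> F \<and> {x, z} \<in> F}
    \<le> 6 * tau n F"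
    (is "card ?ordered \<le> _")
proof -
  let ?triangles = "{T. T \<subseteq> {1..n} \<and> card T = 3 \<and> (\<forall>e. e \<subseteq> T \<and> card e = 2 \<longrightarrow> e \<in> F)}"
  let ?orderings = "\<lambda>T. {(x, y, z). {x, y, z} = T \<and> x \<noteq> y \<and> y \<noteq> z \<and> x \<noteq> z}"
  have finite_triangles: "finite ?triangles"
    by (rule finite_subset[of _ "Pow {1..n}"]) auto
  have "?ordered \<subseteq> (\<Union>T\<in>?triangles. ?orderings T)"
  proof clarify
    fix x y z
    assume xyz: "x \<in> {1..n}" "y \<in> {1..n}" "z \<in> {1..n}" and F: "{x, y} \<in> F" "{y, z} \<in> F" "{x, z} \<in> F"
    then have "{x, y} \<in> edges_K n" "{y, z} \<in> edges_K n" "{x, z} \<in> edges_K n"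
      using assms by auto
    then have distinct: "x \<noteq> y" "y \<noteq> z" "x \<noteq> z"
      unfolding doubleton_in_edges_K by blast+
    have "e \<in> F" if "e \<subseteq> {x, y, z}" "card e = 2" for e
    proof -
      obtain u v where "e = {u, v}" "u \<noteq> v" using \<open>card e = 2\<close> by (meson card_2_iff)
      then show ?thesis using that F by (auto simp: insert_commute)
    qed
    then have "{x, y, z} \<in> ?triangles"
      using xyz distinct by auto
    then show "(x, y, z) \<in> (\<Union>T\<in>?triangles. ?orderings T)"
      using distinct by blast
  qed
  moreover have "finite (?orderings T)" if "T \<in> ?triangles" for T
  proof (rule finite_subset)
    show "?orderings T \<subseteq> T \<times> T \<times> T" by auto
    show "finite (T \<times> T \<times> T)" using that finite_subset[of T "{1..n}"] by auto
  qed
  ultimately have "card ?ordered \<le> card (\<Union>T\<in>?triangles. ?orderings T)"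
    by (intro card_mono finite_UN_I finite_triangles)
  also have "\<dots> \<le> (\<Sum>T\<in>?triangles. card (?orderings T))"
    by (rule card_UN_le[OF finite_triangles])
  also have "\<dots> \<le> (\<Sum>T\<in>?triangles. 6)"
    by (intro sum_mono card_orderings_of_3set_le) simp
  also have "\<dots> = 6 * tau n F"
    by (simp add: tau_def)
  finally show ?thesis .
qed

lemma sum_adj_triangles_le_tau:
  assumes "F \<subseteq> edges_K n"
  shows "(\<Sum>x\<in>{1..n}. \<Sum>y\<in>{1..n}. \<Sum>z\<in>{1..n}. adj F x y * adj F y z * adj F x z)
    \<le> 6 * real (tau n F)"
proof -
  have "(\<Sum>x\<in>{1..n}. \<Sum>y\<in>{1..n}. \<Sum>z\<in>{1..n}. adj F x y * adj F y z * adj F x z)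
      = real (card {(x, y, z) \<in> {1..n} \<times> {1..n} \<times> {1..n}. {x, y} \<in> F \<and> {y, z} \<in> F \<and> {x, z} \<in> F})"
    unfolding adj_def of_bool_conj[symmetric] conj_assoc
    by (rule sum_of_bool_triples) simp_all
  also have "\<dots> \<le> 6 * real (tau n F)"
    using card_ordered_triangles_le_tau[OF assms] by linarith
  finally show ?thesis .
qed

lemma twice_card_minus_cut_K:
  assumes "F \<subseteq> edges_K n"
  shows "2 * real (card (F - cut_K n W))
    = (\<Sum>x\<in>{1..n}. \<Sum>y\<in>{1..n}. adj F x y * of_bool (x \<in> W \<longleftrightarrow> y \<in> W))"
proof -
  have "2 * real (card (F - cut_K n W)) = (\<Sum>x\<in>{1..n}. \<Sum>y\<in>{1..n}. adj (F - cut_K n W) x y)"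
    using assms by (intro sum_adj_eq_twice_card[symmetric]) auto
  also have "\<dots> = (\<Sum>x\<in>{1..n}. \<Sum>y\<in>{1..n}. adj F x y * of_bool (x \<in> W \<longleftrightarrow> y \<in> W))"
  proof (intro sum.cong refl)
    fix x y assume "x \<in> {1..n}" "y \<in> {1..n}"
    then have "{x, y} \<in> cut_K n W \<longleftrightarrow> {x, y} \<in> edges_K n \<and> \<not> (x \<in> W \<longleftrightarrow> y \<in> W)"
      unfolding cut_K_def by (auto simp: doubleton_eq_iff)
    then show "adj (F - cut_K n W) x y = adj F x y * of_bool (x \<in> W \<longleftrightarrow> y \<in> W)"
      using assms by (auto simp: adj_def)
  qed
  finally show ?thesis .
qed

lemma sum_twice_card_minus_neighbourhood_cuts:
  assumes "F \<subseteq> edges_K n"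
  shows "(\<Sum>v\<in>{1..n}. 2 * real (card (F - cut_K n (neighbourhood n F v))))
    = 2 * real n * real (card F) - 2 * (\<Sum>v\<in>{1..n}. degree n F v ^ 2)
      + 2 * (\<Sum>x\<in>{1..n}. \<Sum>y\<in>{1..n}. \<Sum>z\<in>{1..n}. adj F x y * adj F y z * adj F x z)"
proof -
  let ?V = "{1..n}"
  let ?a = "adj F"
  have "2 * real (card (F - cut_K n (neighbourhood n F v)))
      = (\<Sum>x\<in>?V. \<Sum>y\<in>?V. ?a x y - ?a v x * ?a x y - ?a v y * ?a x y + 2 * (?a v x * ?a x y * ?a v y))"
    if "v \<in> ?V" for v
    unfolding twice_card_minus_cut_K[OF assms]
  proof (intro sum.cong refl)
    fix x y assume "x \<in> ?V" "y \<in> ?V"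
    \<comment> \<open>for 0/1 values, [x \<in> N(v) \<longleftrightarrow> y \<in> N(v)] = 1 - a(v,x) - a(v,y) + 2 a(v,x) a(v,y)\<close>
    then show "?a x y * of_bool (x \<in> neighbourhood n F v \<longleftrightarrow> y \<in> neighbourhood n F v)
      = ?a x y - ?a v x * ?a x y - ?a v y * ?a x y + 2 * (?a v x * ?a x y * ?a v y)"
      by (simp add: adj_def neighbourhood_def)
  qed
  then have "(\<Sum>v\<in>?V. 2 * real (card (F - cut_K n (neighbourhood n F v))))
      = (\<Sum>v\<in>?V. \<Sum>x\<in>?V. \<Sum>y\<in>?V. ?a x y) - (\<Sum>v\<in>?V. \<Sum>x\<in>?V. \<Sum>y\<in>?V. ?a v x * ?a x y)
        - (\<Sum>v\<in>?V. \<Sum>x\<in>?V. \<Sum>y\<in>?V. ?a v y * ?a x y)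
        + 2 * (\<Sum>v\<in>?V. \<Sum>x\<in>?V. \<Sum>y\<in>?V. ?a v x * ?a x y * ?a v y)"
    by (simp add: sum.distrib sum_subtractf sum_distrib_left)
  moreover have "(\<Sum>v\<in>?V. \<Sum>x\<in>?V. \<Sum>y\<in>?V. ?a x y) = 2 * real n * real (card F)"
    using sum_adj_eq_twice_card[OF assms] by simp
  moreover have "(\<Sum>v\<in>?V. \<Sum>x\<in>?V. \<Sum>y\<in>?V. ?a v x * ?a x y) = (\<Sum>x\<in>?V. degree n F x ^ 2)"
    by (subst sum.swap) (simp add: degree_def power2_eq_square sum_product adj_commute)
  moreover have "(\<Sum>v\<in>?V. \<Sum>x\<in>?V. \<Sum>y\<in>?V. ?a v y * ?a x y)
      = (\<Sum>v\<in>?V. \<Sum>x\<in>?V. \<Sum>y\<in>?V. ?a v x * ?a x y)"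
    by (rule sum.cong[OF refl], subst sum.swap) (simp add: adj_commute)
  moreover have "(\<Sum>v\<in>?V. \<Sum>x\<in>?V. \<Sum>y\<in>?V. ?a v x * ?a x y * ?a v y)
      = (\<Sum>x\<in>?V. \<Sum>y\<in>?V. \<Sum>z\<in>?V. ?a x y * ?a y z * ?a x z)"
    by (simp add: ac_simps)
  ultimately show ?thesis by simp
qed

lemma four_card_squared_le_sum_degree_squares:
  assumes "F \<subseteq> edges_K n"
  shows "4 * real (card F) ^ 2 \<le> real n * (\<Sum>v\<in>{1..n}. degree n F v ^ 2)"
proof -
  have "(\<Sum>v\<in>{1..n}. degree n F v) = 2 * real (card F)"
    using sum_adj_eq_twice_card[OF assms] by (simp add: degree_def)
  then show ?thesis
    using sum_squared_le_sum_of_squares[of "degree n F" "{1..n}"]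
    by (simp add: power_mult_distrib mult.commute)
qed

lemma triangle_bound_from_neighbourhood_cuts:
  assumes F: "F \<subseteq> edges_K n" and "0 < n"
    and cuts: "\<And>v. v \<in> {1..n} \<Longrightarrow> \<eta> * real n ^ 2 < real (card (F - cut_K n (neighbourhood n F v)))"
  shows "2 * \<eta> * real n ^ 4 + 2 * real (card F) * (4 * real (card F) - real n ^ 2)
    < 12 * real n * real (tau n F)"
proof -
  define N m Q S where "N = real n" and "m = real (card F)"
    and "Q = (\<Sum>v\<in>{1..n}. degree n F v ^ 2)"
    and "S = (\<Sum>x\<in>{1..n}. \<Sum>y\<in>{1..n}. \<Sum>z\<in>{1..n}. adj F x y * adj F y z * adj F x z)"
  have "(\<Sum>v\<in>{1..n}. 2 * \<eta> * N ^ 2) < (\<Sum>v\<in>{1..n}. 2 * real (card (F - cut_K n (neighbourhood n F v))))"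
    using \<open>0 < n\<close> cuts by (intro sum_strict_mono) (auto simp: N_def)
  then have "2 * \<eta> * N ^ 3 < 2 * N * m - 2 * Q + 2 * S"
    unfolding sum_twice_card_minus_neighbourhood_cuts[OF F]
    by (simp add: N_def m_def Q_def S_def power2_eq_square power3_eq_cube mult_ac)
  then have "N * (2 * \<eta> * N ^ 3) < N * (2 * N * m - 2 * Q + 2 * S)"
    using \<open>0 < n\<close> by (simp add: N_def)
  moreover have "4 * m ^ 2 \<le> N * Q"
    using four_card_squared_le_sum_degree_squares[OF F] by (simp add: N_def m_def Q_def)
  moreover have "N * S \<le> N * (6 * real (tau n F))"
    using sum_adj_triangles_le_tau[OF F] by (simp add: N_def S_def mult_left_mono)
  ultimately show ?thesis
    unfolding N_def[symmetric] m_def[symmetric]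
    by (simp add: algebra_simps power2_eq_square power3_eq_cube power4_eq_xxxx)
qed

theorem lemma3p3:
  shows "\<exists>g :: nat \<Rightarrow> real. g \<longlonglongrightarrow> 0 \<and>
    (\<forall>n :: nat. \<forall>(\<delta>::real) (\<eta>::real) (F :: nat set set).
       0 \<le> \<delta> \<and> \<delta> \<le> 1 \<and> \<eta> > 0 \<and> F \<subseteq> edges_K n \<and>
       real (card F) > (1 - \<delta>) * real n ^ 2 / 4 \<and>
       (\<forall>P. is_cut n P \<longrightarrow> real (card (F - P)) > \<eta> * real n ^ 2)
       \<longrightarrow> real (tau n F) > (\<eta> - 3 * \<delta> - g n) * real n ^ 3 / 12)"
proof (intro exI[of _ "\<lambda>_. 0"] conjI allI impI)
  fix n :: nat and \<delta> \<eta> :: real and F :: "nat set set"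
  assume "0 \<le> \<delta> \<and> \<delta> \<le> 1 \<and> \<eta> > 0 \<and> F \<subseteq> edges_K n \<and>
       real (card F) > (1 - \<delta>) * real n ^ 2 / 4 \<and>
       (\<forall>P. is_cut n P \<longrightarrow> real (card (F - P)) > \<eta> * real n ^ 2)"
  then have "0 \<le> \<delta>" "0 < \<eta>" and F: "F \<subseteq> edges_K n"
    and dense: "(1 - \<delta>) * real n ^ 2 < 4 * real (card F)"
    and cuts: "\<And>W. W \<subseteq> {1..n} \<Longrightarrow> \<eta> * real n ^ 2 < real (card (F - cut_K n W))"
    by (auto simp: is_cut_def)
  have "0 < n"
  proof (rule ccontr)
    assume "\<not> 0 < n"
    then have "n = 0" by simp
    moreover from this have "F = {}" using F by (auto simp: edges_K_def)
    ultimately show False using cuts[of "{}"] by simp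
  qed
  have "2 * \<eta> * real n ^ 4 + 2 * real (card F) * (4 * real (card F) - real n ^ 2)
      < 12 * real n * real (tau n F)"
    using F \<open>0 < n\<close> by (rule triangle_bound_from_neighbourhood_cuts) (auto intro: cuts simp: neighbourhood_def)
  moreover have "- \<delta> * real n ^ 4 / 2 \<le> 2 * real (card F) * (4 * real (card F) - real n ^ 2)"
    using dense \<open>0 \<le> \<delta>\<close> by (intro dense_edge_count_quadratic_bound) auto
  moreover have "0 \<le> \<eta> * real n ^ 4" "0 \<le> \<delta> * real n ^ 4"
    using \<open>0 < \<eta>\<close> \<open>0 \<le> \<delta>\<close> by simp_all
  ultimately have "(\<eta> - 3 * \<delta>) * real n ^ 4 < 12 * real n * real (tau n F)"
    by (simp add: left_diff_distrib)
  then have "real n * ((\<eta> - 3 * \<delta>) * real n ^ 3) < real n * (12 * real (tau n F))"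
    by (simp add: power3_eq_cube power4_eq_xxxx ac_simps)
  then show "(\<eta> - 3 * \<delta> - 0) * real n ^ 3 / 12 < real (tau n F)"
    using \<open>0 < n\<close> by simp
qed simp

end
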